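(* Let $d = 2$, $m \geq 1$, $q \in \mathbb{R}^m$ with positive integer entries, $n = q_1 + \cdots + q_m$, and $\tilde Q = \mathrm{blockdiag}(q_1 I_{q_1}, \dots, q_m I_{q_m}) \in \mathbb{R}^{n\times n}$. For $X = (x_1,\dots,x_m) \in (\mathbb{S}^1)^m$ let $\tilde X \in (\mathbb{S}^1)^n$ consist of $x_1$ repeated $q_1$ times, then $x_2$ repeated $q_2$ times, ..., then $x_m$ repeated $q_m$ times. Let $f_m(X) = \frac12\langle qq^\top, \varphi(X^\top X)\rangle$ and $f_n(\tilde X) = \frac12\langle \mathbf{1}_n\mathbf{1}_n^\top, \varphi(\tilde X^\top\tilde X)\rangle$. If $X$ is a critical point of $f_m$, then $\tilde X$ is a critical point of $f_n$. Furthermore, let $M \in \mathbb{R}^{m\times m}$ have entries $m_{ij} = q_iq_j h(x_i^\top x_j)$, $D = \mathrm{diag}(M\mathbf{1}_m)$ with diagonal entries $d_{ii}$, and let $\tilde M \in \mathbb{R}^{n\times n}$ have entries $\tilde m_{ij} = h(\tilde x_i^\top \tilde x_j)$, where $h(t) = t\varphi'(t) - (1-t^2)\varphi''(t)$. If $\lambda_1,\dots,\lambda_{m-1},0$ are the eigenvalues of $L(M)$, then the eigenvalues of $\tilde Q^{1/2} L(\tilde M)\tilde Q^{1/2}$ are exactly $\lambda_1,\dots,\lambda_{m-1},0$ together with, for each $i = 1,\dots,m$, the value $d_{ii}$ with multiplicity $q_i - 1$ (accounting for all $n$ eigenvalues).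
   Context: $\varphi$ is twice continuously differentiable on $[-1,1]$ and applied entrywise to matrices. $(\mathbb{S}^1)^k$ is the set of $2\times k$ real matrices with unit-norm columns. $\langle A,B\rangle = \mathrm{Tr}(A^\top B)$. For symmetric $M$, $L(M) = \mathrm{diag}(M\mathbf{1}) - M$. Criticality is for the Riemannian gradient on $(\mathbb{S}^1)^k$ with the Frobenius metric. (Note $L(M)\mathbf{1}=0$, so $0$ is always an eigenvalue of $L(M)$.) *)

theory Defs
  imports Complex_Main "Jordan_Normal_Form.Char_Poly"
begin

definition circles :: "nat \<Rightarrow> real mat set" where
  "circles k = {X. X \<in> carrier_mat 2 k \<and> (\<forall>j<k. col X j \<bullet> col X j = 1)}"

definition tr :: "real mat \<Rightarrow> real" where
  "tr A = (\<Sum>i<dim_row A. A $$ (i,i))"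

definition frob :: "real mat \<Rightarrow> real mat \<Rightarrow> real" where
  "frob A B = tr (transpose_mat A * B)"

definition lap :: "real mat \<Rightarrow> real mat" where
  "lap M = mat (dim_row M) (dim_col M)
     (\<lambda>(i,j). (if i = j then (\<Sum>l<dim_col M. M $$ (i,l)) else 0) - M $$ (i,j))"

text \<open>Criticality on (S^1)^k for the Riemannian gradient (Frobenius metric): the
  Riemannian gradient vanishes iff the differential of F vanishes on every tangent
  vector, i.e. iff (F o gamma)'(0) = 0 for every curve gamma in (S^1)^k through X that is
  differentiable at 0.\<close>
definition critical :: "nat \<Rightarrow> (real mat \<Rightarrow> real) \<Rightarrow> real mat \<Rightarrow> bool" where
  "critical k F X \<longleftrightarrow> X \<in> circles k \<and>
     (\<forall>\<gamma>::real \<Rightarrow> real mat.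
        (\<forall>t. \<gamma> t \<in> circles k) \<and> \<gamma> 0 = X \<and>
        (\<forall>a<2. \<forall>b<k. (\<lambda>t. \<gamma> t $$ (a,b)) differentiable (at 0))
        \<longrightarrow> ((\<lambda>t. F (\<gamma> t)) has_real_derivative 0) (at 0))"

text \<open>Block index of position j (0-based) for block sizes q 0, ..., q (m-1):
  the unique i with (sum l<i. q l) <= j < (sum l<Suc i. q l).\<close>
definition blk :: "(nat \<Rightarrow> nat) \<Rightarrow> nat \<Rightarrow> nat" where
  "blk q j = (LEAST i. j < (\<Sum>l<Suc i. q l))"

definition rep_cols :: "(nat \<Rightarrow> nat) \<Rightarrow> nat \<Rightarrow> real mat \<Rightarrow> real mat" where
  "rep_cols q m X = mat 2 (\<Sum>i<m. q i) (\<lambda>(a,j). X $$ (a, blk q j))"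

definition sqrtQ :: "(nat \<Rightarrow> nat) \<Rightarrow> nat \<Rightarrow> real mat" where
  "sqrtQ q m = mat (\<Sum>i<m. q i) (\<Sum>i<m. q i)
     (\<lambda>(i,j). if i = j then sqrt (real (q (blk q i))) else 0)"

definition eigenvalues :: "real mat \<Rightarrow> real multiset" where
  "eigenvalues A = proots (char_poly A)"

end

theory Submission
  imports Defs
begin

text \<open>
  On a product of circles, the derivative of
  1/2 sum_ij W_ij phi(y_i . y_j) along a curve is sum_i omega_i tau_i, where omega_i is the angular
  speed of column i and tau_i = sum_j W_ij phi'(y_i . y_j) det(y_i, y_j) is its torque; so the
  critical points are exactly the configurations without torque. A copy of x_i in Xt meets every x_j
  exactly q_j times, hence its torque for the weights 1 1^T is the torque of x_i for q q^T divided
  by q_i.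

  The matrix A = Q^(1/2) L(Mt) Q^(1/2) has diagonal entries d_i and off-diagonal entries
  -sqrt(q_i q_j) h(x_i . x_j). The normalised block indicators span an invariant subspace on which A
  acts as L(M), and e_a - e_b with a, b in block i is an eigenvector for d_i. Completing the
  indicators by the unit vectors at the positions that do not lead their block gives a basis in which
  A is block upper triangular, with diagonal blocks L(M) and the diagonal matrix of the d_i, each
  repeated q_i - 1 times.
\<close>

lemma index_mult_mat_sum:
  "A \<in> carrier_mat n k \<Longrightarrow> B \<in> carrier_mat k l \<Longrightarrow> i < n \<Longrightarrow> j < l \<Longrightarrow>
    (A * B) $$ (i,j) = (\<Sum>a<k. A $$ (i,a) * B $$ (a,j))"
  by (simp add: index_mult_mat scalar_prod_def lessThan_atLeast0)

lemma index_diag_conj: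
  fixes f :: "nat \<Rightarrow> 'a::comm_semiring_1"
  assumes L: "L \<in> carrier_mat n n" and a: "a < n" and b: "b < n"
  defines "D \<equiv> mat n n (\<lambda>(i,j). if i = j then f i else 0)"
  shows "(D * L * D) $$ (a,b) = f a * L $$ (a,b) * f b"
proof -
  have DL: "(D * L) $$ (a,j) = f a * L $$ (a,j)" if "j < n" for j
  proof -
    have "(D * L) $$ (a,j) = (\<Sum>i<n. D $$ (a,i) * L $$ (i,j))"
      using L a that by (intro index_mult_mat_sum) (auto simp: D_def)
    also have "\<dots> = f a * L $$ (a,j)"
      using a by (simp add: D_def if_distrib[of "\<lambda>x. x * _"] cong: if_cong)
    finally show ?thesis .
  qed
  have "(D * L * D) $$ (a,b) = (\<Sum>j<n. (D * L) $$ (a,j) * D $$ (j,b))"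
    using L a b by (intro index_mult_mat_sum) (auto simp: D_def)
  also have "\<dots> = f a * L $$ (a,b) * f b"
    using b DL by (simp add: D_def if_distrib[of "\<lambda>x. _ * x"] cong: if_cong)
  finally show ?thesis .
qed

lemma char_poly_nonzero: "A \<in> carrier_mat n n \<Longrightarrow> char_poly A \<noteq> 0"
  using degree_monic_char_poly[of A n] by auto

lemma char_poly_conj:
  fixes A :: "'a::field mat"
  assumes "A \<in> carrier_mat n n" "S \<in> carrier_mat n n" "T \<in> carrier_mat n n" and "T * S = 1\<^sub>m n"
  shows "char_poly (T * A * S) = char_poly A"
proof -
  have ST: "S * T = 1\<^sub>m n" using assms by (intro mat_mult_left_right_inverse[of T n]) simp_all
  have "S * (T * A * S) * T = (S * T) * A * (S * T)"
    using assms by (simp add: assoc_mult_mat[of _ n n _ n _ n])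
  also have "\<dots> = A" using assms ST by simp
  finally have "similar_mat_wit A (T * A * S) S T"
    using assms ST by (intro similar_mat_witI[of _ _ n]) auto
  then have "similar_mat A (T * A * S)"
    unfolding similar_mat_def by blast
  then show ?thesis by (rule char_poly_similar[symmetric])
qed

lemma char_poly_four_block_lower_left_zero:
  fixes A1 :: "'a::idom mat"
  assumes A1: "A1 \<in> carrier_mat k k" and A2: "A2 \<in> carrier_mat k l" and A3: "A3 \<in> carrier_mat l l"
  shows "char_poly (four_block_mat A1 A2 (0\<^sub>m l k) A3) = char_poly A1 * char_poly A3"
proof -
  let ?cm = "\<lambda>A. [:0, 1:] \<cdot>\<^sub>m 1\<^sub>m (dim_row A) + map_mat (\<lambda>a. [:- a:]) A"
  have "?cm (four_block_mat A1 A2 (0\<^sub>m l k) A3)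
      = four_block_mat (?cm A1) (map_mat (\<lambda>a. [:- a:]) A2) (0\<^sub>m l k) (?cm A3)"
    by (rule eq_matI) (use A1 A2 A3 in \<open>auto simp: one_poly_def\<close>)
  also have "det \<dots> = det (?cm A1) * det (?cm A3)"
    by (rule det_four_block_mat_lower_left_zero[OF _ _ refl]) (use A1 A2 A3 in auto)
  finally show ?thesis
    using A1 A3 by (simp add: char_poly_defs)
qed

lemma char_poly_block_upper_triangular:
  fixes B :: "'a::idom mat"
  assumes B: "B \<in> carrier_mat (k + l) (k + l)"
    and zero: "\<And>i j. k \<le> i \<Longrightarrow> i < k + l \<Longrightarrow> j < k \<Longrightarrow> B $$ (i,j) = 0"
  shows "char_poly B
    = char_poly (mat k k (\<lambda>(i,j). B $$ (i,j))) * char_poly (mat l l (\<lambda>(i,j). B $$ (k + i, k + j)))"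
proof -
  have "B = four_block_mat (mat k k (\<lambda>(i,j). B $$ (i,j))) (mat k l (\<lambda>(i,j). B $$ (i, k + j)))
      (0\<^sub>m l k) (mat l l (\<lambda>(i,j). B $$ (k + i, k + j)))"
    by (rule eq_matI) (use B zero in auto)
  then show ?thesis
    by (metis char_poly_four_block_lower_left_zero mat_carrier)
qed

lemma proots_char_poly_diagonal:
  fixes f :: "nat \<Rightarrow> 'a::idom"
  shows "proots (char_poly (mat N N (\<lambda>(i,j). if i = j then f i else 0))) = (\<Sum>i<N. {#f i#})"
proof -
  have "diag_mat (mat N N (\<lambda>(i,j). if i = j then f i else 0)) = map f [0..<N]"
    by (simp add: diag_mat_def cong: map_cong)
  then have "char_poly (mat N N (\<lambda>(i,j). if i = j then f i else 0)) = (\<Prod>a\<leftarrow>map f [0..<N]. [:- a, 1:])"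
    by (subst char_poly_upper_triangular[of _ N]) (auto simp: upper_triangular_def)
  also have "\<dots> = (\<Prod>p\<leftarrow>map (\<lambda>i. [:- f i, 1:]) [0..<N]. p)"
    by (simp add: o_def)
  finally have "proots (char_poly (mat N N (\<lambda>(i,j). if i = j then f i else 0)))
      = sum_list (map proots (map (\<lambda>i. [:- f i, 1:]) [0..<N]))"
    by (simp only:) (rule proots_prod_list, auto)
  also have "\<dots> = sum_list (map (\<lambda>i. {#f i#}) [0..<N])"
    by (simp add: o_def)
  also have "\<dots> = (\<Sum>i<N. {#f i#})"
    by (simp only: sum_set_upt_conv_sum_list_nat[symmetric] set_upt lessThan_atLeast0)
  finally show ?thesis .
qed

section \<open>Block indexing\<close>

definition block_start :: "(nat \<Rightarrow> nat) \<Rightarrow> nat \<Rightarrow> nat" where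
  "block_start q i = (\<Sum>l<i. q l)"

lemma block_start_0 [simp]: "block_start q 0 = 0"
  by (simp add: block_start_def)

lemma block_start_Suc [simp]: "block_start q (Suc i) = block_start q i + q i"
  by (simp add: block_start_def)

lemma block_start_mono: "i \<le> j \<Longrightarrow> block_start q i \<le> block_start q j"
  unfolding block_start_def by (rule sum_mono2) auto

lemma block_start_less_imp_less: "block_start q i < block_start q j \<Longrightarrow> i < j"
  using block_start_mono[of j i q] by (meson leD not_less)

lemma block_start_less:
  assumes "\<And>i. i < m \<Longrightarrow> 0 < q i" and "i < m"
  shows "block_start q i < block_start q m"
proof -
  have "block_start q i < block_start q (Suc i)" using assms by simp
  also have "\<dots> \<le> block_start q m" using assms(2) by (intro block_start_mono) simp
  finally show ?thesis .
qed

lemma block_start_ge: "(\<And>i. i < k \<Longrightarrow> 0 < q i) \<Longrightarrow> k \<le> block_start q k"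
proof (induction k)
  case (Suc k)
  then have "k \<le> block_start q k" and "0 < q k" by simp_all
  then show ?case by simp
qed simp

lemma block_start_pred:
  "(\<And>i. i < k \<Longrightarrow> 0 < q i) \<Longrightarrow> block_start (\<lambda>i. q i - 1) k = block_start q k - k"
proof (induction k)
  case (Suc k)
  have "k \<le> block_start q k" and "0 < q k" using Suc.prems by (simp_all add: block_start_ge)
  moreover have "block_start (\<lambda>i. q i - 1) k = block_start q k - k" using Suc by simp
  ultimately show ?case by simp
qed simp

lemma blk_altdef: "blk q a = (LEAST i. a < block_start q (Suc i))"
  by (simp add: blk_def block_start_def)

lemma blk_eqI:
  assumes "block_start q j \<le> a" and "a < block_start q (Suc j)"
  shows "blk q a = j"
  unfolding blk_altdef
proof (rule Least_equality)
  show "a < block_start q (Suc j)" by (fact assms(2))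
  show "j \<le> i" if "a < block_start q (Suc i)" for i
  proof (rule ccontr)
    assume "\<not> j \<le> i"
    then have "block_start q (Suc i) \<le> block_start q j" by (intro block_start_mono) simp
    with assms(1) that show False by simp
  qed
qed

lemma blk_bounds:
  assumes "a < block_start q m"
  shows "blk q a < m" and "block_start q (blk q a) \<le> a" and "a < block_start q (Suc (blk q a))"
proof -
  have "m \<noteq> 0" using assms by (intro notI) simp
  then have ex: "a < block_start q (Suc (m - 1))" using assms by simp
  then have "blk q a \<le> m - 1" unfolding blk_altdef by (rule Least_le)
  with \<open>m \<noteq> 0\<close> show "blk q a < m" by simp
  show "a < block_start q (Suc (blk q a))"
    unfolding blk_altdef by (rule LeastI) (fact ex)
  show "block_start q (blk q a) \<le> a"
  proof (cases "blk q a")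
    case (Suc i)
    then have "\<not> a < block_start q (Suc i)"
      unfolding blk_altdef by (intro not_less_Least) simp
    with Suc show ?thesis by simp
  qed simp
qed

lemma blk_block_start: "q j > 0 \<Longrightarrow> blk q (block_start q j) = j"
  by (rule blk_eqI) auto

lemma blk_mono:
  assumes "a \<le> b" and "b < block_start q m"
  shows "blk q a \<le> blk q b"
  unfolding blk_altdef[of q a]
  by (rule Least_le) (use assms blk_bounds(3)[OF assms(2)] in simp)

lemma sum_split_blocks:
  "(\<Sum>a<block_start q k. F a) = (\<Sum>j<k. \<Sum>a\<in>{block_start q j..<block_start q (Suc j)}. F a)"
proof (induction k)
  case (Suc k)
  have "(\<Sum>a<block_start q (Suc k). F a)
      = (\<Sum>a<block_start q k. F a) + (\<Sum>a\<in>{block_start q k..<block_start q (Suc k)}. F a)"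
    by (simp add: sum.atLeastLessThan_concat[symmetric] lessThan_atLeast0)
  with Suc show ?case by simp
qed simp

lemma sum_comp_blk: "(\<Sum>a<block_start q k. G (blk q a)) = (\<Sum>j<k. \<Sum>_<q j. G j)"
proof -
  have "(\<Sum>a<block_start q k. G (blk q a))
      = (\<Sum>j<k. \<Sum>a\<in>{block_start q j..<block_start q (Suc j)}. G j)"
    unfolding sum_split_blocks by (intro sum.cong refl) (metis atLeastLessThan_iff blk_eqI)
  also have "\<dots> = (\<Sum>j<k. \<Sum>_<q j. G j)"
    by (rule sum.cong[OF refl]) (subst sum.atLeastLessThan_shift_0, simp add: lessThan_atLeast0)
  finally show ?thesis .
qed

lemma sum_real_comp_blk:
  "(\<Sum>a<block_start q k. G (blk q a)) = (\<Sum>j<k. real (q j) * (G j :: real))"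
  by (simp add: sum_comp_blk)

lemma sum_singleton_replicate_mset: "(\<Sum>_<n. {#x#}) = replicate_mset n x"
  by (induction n) simp_all

section \<open>Spectrum of the blown-up Laplacian\<close>

definition blow_up :: "(nat \<Rightarrow> nat) \<Rightarrow> nat \<Rightarrow> (nat \<Rightarrow> nat \<Rightarrow> real) \<Rightarrow> real mat" where
  "blow_up q m H = mat (block_start q m) (block_start q m) (\<lambda>(a,b). H (blk q a) (blk q b))"

text \<open>For m \<le> c, the (c - m)-th position, counting from 0, that does not lead its block: these
  positions form blocks of sizes q i - 1, and each block up to the current one has one leading
  position.\<close>
definition nonlead :: "(nat \<Rightarrow> nat) \<Rightarrow> nat \<Rightarrow> nat \<Rightarrow> nat" where
  "nonlead q m c = c - m + blk (\<lambda>i. q i - 1) (c - m) + 1"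

lemma nonlead_bounds:
  assumes q: "\<And>i. i < m \<Longrightarrow> 0 < q i" and c: "m \<le> c" "c < block_start q m"
  shows "nonlead q m c < block_start q m"
    and "blk q (nonlead q m c) = blk (\<lambda>i. q i - 1) (c - m)"
    and "blk q (nonlead q m c) < m"
    and "block_start q (blk q (nonlead q m c)) < nonlead q m c"
proof -
  define j where "j = blk (\<lambda>i. q i - 1) (c - m)"
  have "c - m < block_start (\<lambda>i. q i - 1) m"
    using c block_start_pred[of m q] q by (simp add: diff_less_mono)
  note bounds = blk_bounds[OF this, folded j_def]
  have q': "block_start (\<lambda>i. q i - 1) i = block_start q i - i" "i \<le> block_start q i" if "i < m" for i
    using q that block_start_pred[of i q] block_start_ge[of i q] by simp_all
  have "nonlead q m c = c - m + j + 1" by (simp add: nonlead_def j_def)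
  with bounds q'[of j] q[of j]
  have "block_start q j < nonlead q m c" "nonlead q m c < block_start q (Suc j)" by auto
  moreover from this have "blk q (nonlead q m c) = j" by (intro blk_eqI) auto
  moreover have "block_start q (Suc j) \<le> block_start q m"
    using bounds(1) by (intro block_start_mono) simp
  ultimately show "nonlead q m c < block_start q m" "blk q (nonlead q m c) = blk (\<lambda>i. q i - 1) (c - m)"
    "blk q (nonlead q m c) < m" "block_start q (blk q (nonlead q m c)) < nonlead q m c"
    using bounds(1) by (auto simp: j_def)
qed

lemma nonlead_strict_mono:
  assumes q: "\<And>i. i < m \<Longrightarrow> 0 < q i" and "m \<le> c" "c < c'" "c' < block_start q m"
  shows "nonlead q m c < nonlead q m c'"
proof -
  have "c' - m < block_start (\<lambda>i. q i - 1) m"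
    using assms block_start_pred[of m q] by (simp add: diff_less_mono)
  then have "blk (\<lambda>i. q i - 1) (c - m) \<le> blk (\<lambda>i. q i - 1) (c' - m)"
    using assms(3) by (intro blk_mono) simp_all
  with assms(2,3) show ?thesis by (simp add: nonlead_def)
qed

lemma nonlead_eq_iff:
  assumes "\<And>i. i < m \<Longrightarrow> 0 < q i"
    and "m \<le> c" "c < block_start q m" "m \<le> c'" "c' < block_start q m"
  shows "nonlead q m c = nonlead q m c' \<longleftrightarrow> c = c'"
proof
  assume "nonlead q m c = nonlead q m c'"
  then show "c = c'"
    using nonlead_strict_mono[of m q, OF assms(1)] assms(2-5)
    by (cases c c' rule: linorder_cases) (metis less_irrefl)+
qed simp

lemma nonlead_neq_block_start:
  assumes q: "\<And>i. i < m \<Longrightarrow> 0 < q i" and c: "m \<le> c" "c < block_start q m"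
  shows "nonlead q m c \<noteq> block_start q j"
proof
  assume eq: "nonlead q m c = block_start q j"
  define i where "i = blk q (nonlead q m c)"
  have "block_start q i < block_start q j"
    using nonlead_bounds(4)[of m q c, OF q c] eq by (simp add: i_def)
  moreover have "block_start q j < block_start q (Suc i)"
    using blk_bounds(3)[OF nonlead_bounds(1)[of m q c, OF q c]] eq by (simp add: i_def)
  ultimately show False
    using block_start_less_imp_less[of q i j] block_start_less_imp_less[of q j "Suc i"] by simp
qed

definition block_basis :: "(nat \<Rightarrow> nat) \<Rightarrow> nat \<Rightarrow> real mat" where
  "block_basis q m = mat (block_start q m) (block_start q m) (\<lambda>(a,c).
     if c < m then (if blk q a = c then 1 / sqrt (real (q c)) else 0)
     else if a = nonlead q m c then 1 else 0)"

definition block_basis_inv :: "(nat \<Rightarrow> nat) \<Rightarrow> nat \<Rightarrow> real mat" where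
  "block_basis_inv q m = mat (block_start q m) (block_start q m) (\<lambda>(c,a).
     if c < m then (if a = block_start q c then sqrt (real (q c)) else 0)
     else (if a = nonlead q m c then 1 else 0)
        - (if a = block_start q (blk q (nonlead q m c)) then 1 else 0))"

lemma mult_block_basis_index:
  assumes q: "\<And>i. i < m \<Longrightarrow> 0 < q i" and N: "N \<in> carrier_mat n (block_start q m)"
    and a: "a < n" and c: "c < block_start q m"
  shows "(N * block_basis q m) $$ (a,c) =
    (if c < m then (\<Sum>b<block_start q m. if blk q b = c then N $$ (a,b) else 0) / sqrt (real (q c))
     else N $$ (a, nonlead q m c))"
proof -
  have "(N * block_basis q m) $$ (a,c) = (\<Sum>b<block_start q m. N $$ (a,b) * block_basis q m $$ (b,c))"
    using N a c by (intro index_mult_mat_sum) (auto simp: block_basis_def)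
  also have "\<dots> = (if c < m
      then (\<Sum>b<block_start q m. if blk q b = c then N $$ (a,b) else 0) / sqrt (real (q c))
     else N $$ (a, nonlead q m c))"
  proof (cases "c < m")
    case True
    with c show ?thesis
      by (simp add: block_basis_def sum_divide_distrib) (intro sum.cong; simp)
  next
    case False
    with c nonlead_bounds(1)[of m q c, OF q] show ?thesis
      by (simp add: block_basis_def if_distrib[of "\<lambda>x. _ * x"] cong: if_cong)
  qed
  finally show ?thesis .
qed

lemma block_basis_inv_mult_index:
  assumes q: "\<And>i. i < m \<Longrightarrow> 0 < q i" and N: "N \<in> carrier_mat (block_start q m) n"
    and c: "c < block_start q m" and b: "b < n"
  shows "(block_basis_inv q m * N) $$ (c,b) =
    (if c < m then sqrt (real (q c)) * N $$ (block_start q c, b)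
     else N $$ (nonlead q m c, b) - N $$ (block_start q (blk q (nonlead q m c)), b))"
proof -
  have "(block_basis_inv q m * N) $$ (c,b)
      = (\<Sum>a<block_start q m. block_basis_inv q m $$ (c,a) * N $$ (a,b))"
    using N b c by (intro index_mult_mat_sum) (auto simp: block_basis_inv_def)
  also have "\<dots> = (if c < m then sqrt (real (q c)) * N $$ (block_start q c, b)
     else N $$ (nonlead q m c, b) - N $$ (block_start q (blk q (nonlead q m c)), b))"
  proof (cases "c < m")
    case True
    with c block_start_less[of m q c, OF q] show ?thesis
      by (simp add: block_basis_inv_def if_distrib[of "\<lambda>x. x * _"] cong: if_cong)
  next
    case False
    with c nonlead_bounds(1,4)[of m q c, OF q] show ?thesis
      by (simp add: block_basis_inv_def left_diff_distrib sum_subtractf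
          if_distrib[of "\<lambda>x. x * _"] cong: if_cong)
  qed
  finally show ?thesis .
qed

lemma block_basis_inv_mult_block_basis:
  assumes q: "\<And>i. i < m \<Longrightarrow> 0 < q i"
  shows "block_basis_inv q m * block_basis q m = 1\<^sub>m (block_start q m)"
proof (rule eq_matI)
  fix c' c
  assume "c' < dim_row (1\<^sub>m (block_start q m) :: real mat)" "c < dim_col (1\<^sub>m (block_start q m) :: real mat)"
  then have c': "c' < block_start q m" and c: "c < block_start q m" by simp_all
  have S: "block_basis q m \<in> carrier_mat (block_start q m) (block_start q m)"
    by (simp add: block_basis_def)
  note TS = block_basis_inv_mult_index[of m q, OF q S c' c]
  note nl = nonlead_bounds[of m q c', OF q _ c'] nonlead_bounds[of m q c, OF q _ c]
  note ne = nonlead_neq_block_start[of m q, OF q]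
  show "(block_basis_inv q m * block_basis q m) $$ (c',c) = 1\<^sub>m (block_start q m) $$ (c',c)"
  proof (cases "c' < m"; cases "c < m")
    assume "c' < m" "c < m"
    with c c' q[of c] q[of c'] block_start_less[of m q c', OF q] show ?thesis
      by (simp only: TS) (simp add: block_basis_def blk_block_start)
  next
    assume "c' < m" "\<not> c < m"
    with c c' q ne[of c c'] show ?thesis
      by (simp only: TS) (simp add: block_basis_def block_start_less)
  next
    assume "\<not> c' < m" "c < m"
    with c c' nl(1-4) q[of "blk q (nonlead q m c')"] show ?thesis
      by (simp only: TS) (simp add: block_basis_def blk_block_start)
  next
    assume "\<not> c' < m" "\<not> c < m"
    with c c' nl(1,4) ne[of c "blk q (nonlead q m c')"] nonlead_eq_iff[of m q c' c, OF q] show ?thesis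
      by (simp only: TS) (auto simp: block_basis_def)
  qed
qed (simp_all add: block_basis_def block_basis_inv_def)

lemma sqrtQ_lap_blow_up_index:
  fixes H :: "nat \<Rightarrow> nat \<Rightarrow> real"
  assumes a: "a < block_start q m" and b: "b < block_start q m"
  shows "(sqrtQ q m * lap (blow_up q m H) * sqrtQ q m) $$ (a,b) =
    (if a = b then (\<Sum>j<m. real (q (blk q a)) * real (q j) * H (blk q a) j) else 0)
    - sqrt (real (q (blk q a))) * sqrt (real (q (blk q b))) * H (blk q a) (blk q b)"
proof -
  let ?L = "lap (blow_up q m H)"
  have "(\<Sum>l<block_start q m. H (blk q a) (blk q l)) = (\<Sum>j<m. real (q j) * H (blk q a) j)"
    by (rule sum_real_comp_blk)
  then have L: "?L $$ (a,b)
      = (if a = b then (\<Sum>j<m. real (q j) * H (blk q a) j) else 0) - H (blk q a) (blk q b)"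
    using a b by (cases "a = b") (simp_all add: lap_def blow_up_def)
  have "sqrtQ q m = mat (block_start q m) (block_start q m)
      (\<lambda>(i,j). if i = j then sqrt (real (q (blk q i))) else 0)"
    by (simp add: sqrtQ_def block_start_def)
  then have "(sqrtQ q m * ?L * sqrtQ q m) $$ (a,b)
      = sqrt (real (q (blk q a))) * ?L $$ (a,b) * sqrt (real (q (blk q b)))"
    using a b by (simp only:) (rule index_diag_conj, auto simp: lap_def blow_up_def)
  also have "\<dots> = (if a = b then (\<Sum>j<m. real (q (blk q a)) * real (q j) * H (blk q a) j) else 0)
    - sqrt (real (q (blk q a))) * sqrt (real (q (blk q b))) * H (blk q a) (blk q b)"
  proof (cases "a = b")
    case True
    have "sqrt (real k) * x * sqrt (real k) = real k * x" for k x
      by (simp add: mult.commute mult.left_commute[of _ x])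
    with True show ?thesis
      unfolding L by (simp add: sum_distrib_left algebra_simps)
  qed (simp add: L)
  finally show ?thesis .
qed

lemma sqrtQ_lap_blow_up_mult_block_basis:
  fixes H :: "nat \<Rightarrow> nat \<Rightarrow> real" and q :: "nat \<Rightarrow> nat" and m :: nat
  defines "A \<equiv> sqrtQ q m * lap (blow_up q m H) * sqrtQ q m"
    and "d \<equiv> \<lambda>i. \<Sum>j<m. real (q i) * real (q j) * H i j"
  assumes q: "\<And>i. i < m \<Longrightarrow> 0 < q i" and a: "a < block_start q m" and c: "c < block_start q m"
  shows "(A * block_basis q m) $$ (a,c) =
    (if c < m then (if blk q a = c then d c / sqrt (real (q c)) else 0)
       - sqrt (real (q (blk q a))) * real (q c) * H (blk q a) c
     else A $$ (a, nonlead q m c))"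
proof -
  have A: "A \<in> carrier_mat (block_start q m) (block_start q m)"
    unfolding A_def sqrtQ_def lap_def blow_up_def block_start_def by (intro mult_carrier_mat) auto
  let ?s = "\<lambda>i. sqrt (real (q i))"
  define G where "G j = (if j = c then ?s (blk q a) * ?s j * H (blk q a) j else 0)" for j
  have "(\<Sum>b<block_start q m. if blk q b = c then A $$ (a,b) else 0)
      = (\<Sum>b<block_start q m. if b = a \<and> blk q a = c then d c else 0) - (\<Sum>b<block_start q m. G (blk q b))"
    unfolding sum_subtractf[symmetric] using a
    by (intro sum.cong) (auto simp: A_def sqrtQ_lap_blow_up_index G_def d_def)
  also have "(\<Sum>b<block_start q m. G (blk q b)) = (\<Sum>j<m. real (q j) * G j)"
    by (rule sum_real_comp_blk)
  finally have "c < m \<Longrightarrow> (\<Sum>b<block_start q m. if blk q b = c then A $$ (a,b) else 0)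
      = (if blk q a = c then d c else 0) - real (q c) * (?s (blk q a) * ?s c * H (blk q a) c)"
    using a by (simp add: G_def if_distrib[of "\<lambda>x. _ * x"] cong: if_cong)
  then show ?thesis
    using q[of c] mult_block_basis_index[of m q A, OF q A a c]
    by (simp add: diff_divide_distrib)
qed

lemma block_basis_conj_sqrtQ_lap_blow_up:
  fixes H :: "nat \<Rightarrow> nat \<Rightarrow> real" and q :: "nat \<Rightarrow> nat" and m :: nat
  defines "B \<equiv> block_basis_inv q m * (sqrtQ q m * lap (blow_up q m H) * sqrtQ q m) * block_basis q m"
    and "M \<equiv> mat m m (\<lambda>(i,j). real (q i) * real (q j) * H i j)"
  assumes q: "\<And>i. i < m \<Longrightarrow> 0 < q i" and i: "i < block_start q m" and j: "j < block_start q m"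
  shows "i < m \<Longrightarrow> j < m \<Longrightarrow> B $$ (i,j) = lap M $$ (i,j)"
    and "m \<le> i \<Longrightarrow> j < m \<Longrightarrow> B $$ (i,j) = 0"
    and "m \<le> i \<Longrightarrow> m \<le> j \<Longrightarrow>
           B $$ (i,j) = (if i = j then (\<Sum>l<m. M $$ (blk (\<lambda>i. q i - 1) (i - m), l)) else 0)"
proof -
  define A where "A = sqrtQ q m * lap (blow_up q m H) * sqrtQ q m"
  let ?n = "block_start q m"
  have A: "A \<in> carrier_mat ?n ?n"
    unfolding A_def sqrtQ_def lap_def blow_up_def block_start_def by (intro mult_carrier_mat) auto
  have S: "block_basis q m \<in> carrier_mat ?n ?n" and T: "block_basis_inv q m \<in> carrier_mat ?n ?n"
    by (simp_all add: block_basis_def block_basis_inv_def)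
  have B: "B = block_basis_inv q m * (A * block_basis q m)"
    unfolding B_def A_def[symmetric] by (rule assoc_mult_mat[OF T A S])
  note B_index = block_basis_inv_mult_index[of m q "A * block_basis q m",
      OF q mult_carrier_mat[OF A S] i j,
      folded B]
  note AS = sqrtQ_lap_blow_up_mult_block_basis[where H = H and q = q and m = m, OF q, folded A_def]
  note A_index = sqrtQ_lap_blow_up_index[where H = H and q = q and m = m, folded A_def]
  note nl = nonlead_bounds[of m q i, OF q _ i]
  show "B $$ (i,j) = lap M $$ (i,j)" if "i < m" "j < m"
    using that i j q[of i] q[of j] block_start_less[of m q i, OF q]
    by (simp add: B_index AS blk_block_start lap_def M_def right_diff_distrib flip: mult.assoc)
  show "B $$ (i,j) = 0" if "m \<le> i" "j < m"
    using that i j nl q[of "blk q (nonlead q m i)"] by (simp add: B_index AS blk_block_start)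
  show "B $$ (i,j) = (if i = j then (\<Sum>l<m. M $$ (blk (\<lambda>i. q i - 1) (i - m), l)) else 0)"
    if "m \<le> i" "m \<le> j"
    using that i j nl nonlead_bounds(1)[of m q j, OF q _ j] nonlead_eq_iff[of m q i j, OF q]
      nonlead_neq_block_start[of m q j "blk q (nonlead q m i)", OF q] q[of "blk q (nonlead q m i)"]
    by (auto simp: B_index AS A_index M_def blk_block_start)
qed

lemma eigenvalues_sqrtQ_lap_blow_up:
  fixes H :: "nat \<Rightarrow> nat \<Rightarrow> real" and q :: "nat \<Rightarrow> nat" and m :: nat
  defines "M \<equiv> mat m m (\<lambda>(i,j). real (q i) * real (q j) * H i j)"
  assumes q: "\<And>i. i < m \<Longrightarrow> 0 < q i"
  shows "eigenvalues (sqrtQ q m * lap (blow_up q m H) * sqrtQ q m)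
    = eigenvalues (lap M) + (\<Sum>i<m. replicate_mset (q i - 1) (\<Sum>j<m. M $$ (i,j)))"
proof -
  define A where "A = sqrtQ q m * lap (blow_up q m H) * sqrtQ q m"
  define B where "B = block_basis_inv q m * A * block_basis q m"
  define d where "d i = (\<Sum>j<m. M $$ (i,j))" for i
  let ?n = "block_start q m"
  note B_index = block_basis_conj_sqrtQ_lap_blow_up[where H = H and q = q and m = m, OF q,
    folded M_def A_def B_def]
  have mn: "?n = m + (?n - m)" using block_start_ge[of m q, OF q] by simp
  have A: "A \<in> carrier_mat ?n ?n"
    unfolding A_def sqrtQ_def lap_def blow_up_def block_start_def by (intro mult_carrier_mat) auto
  have S: "block_basis q m \<in> carrier_mat ?n ?n" and T: "block_basis_inv q m \<in> carrier_mat ?n ?n"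
    by (simp_all add: block_basis_def block_basis_inv_def)
  have B: "B \<in> carrier_mat ?n ?n"
    unfolding B_def by (rule mult_carrier_mat[OF mult_carrier_mat[OF T A] S])
  have lapM: "lap M \<in> carrier_mat m m" by (simp add: lap_def M_def)
  have "char_poly A = char_poly B"
    unfolding B_def using block_basis_inv_mult_block_basis[of m q, OF q]
    by (rule char_poly_conj[OF A S T, symmetric])
  also have "\<dots> = char_poly (mat m m (\<lambda>(i,j). B $$ (i,j)))
      * char_poly (mat (?n - m) (?n - m) (\<lambda>(i,j). B $$ (m + i, m + j)))"
    using B B_index(2) mn by (intro char_poly_block_upper_triangular) simp_all
  also have "mat m m (\<lambda>(i,j). B $$ (i,j)) = lap M"
    using mn by (intro eq_matI) (simp_all add: B_index(1) lap_def M_def)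
  also have "mat (?n - m) (?n - m) (\<lambda>(i,j). B $$ (m + i, m + j))
      = mat (?n - m) (?n - m) (\<lambda>(i,j). if i = j then d (blk (\<lambda>i. q i - 1) i) else 0)"
    using mn by (intro eq_matI) (simp_all add: B_index(3) d_def)
  finally have "eigenvalues A = eigenvalues (lap M) + (\<Sum>c<?n - m. {#d (blk (\<lambda>i. q i - 1) c)#})"
    unfolding eigenvalues_def
    by (simp only: proots_mult[OF char_poly_nonzero[OF lapM] char_poly_nonzero[OF mat_carrier]]
        proots_char_poly_diagonal)
  also have "?n - m = block_start (\<lambda>i. q i - 1) m"
    using block_start_pred[of m q] q by simp
  also have "(\<Sum>c<block_start (\<lambda>i. q i - 1) m. {#d (blk (\<lambda>i. q i - 1) c)#})
      = (\<Sum>i<m. replicate_mset (q i - 1) (d i))"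
    using sum_comp_blk[where G = "\<lambda>j. {#d j#}" and q = "\<lambda>i. q i - 1" and k = m]
    by (simp only: sum_singleton_replicate_mset)
  finally show ?thesis by (simp add: A_def d_def)
qed

section \<open>Critical points on products of circles\<close>

definition pair_energy :: "(real \<Rightarrow> real) \<Rightarrow> real mat \<Rightarrow> real mat \<Rightarrow> real" where
  "pair_energy \<phi> W Y = 1/2 * frob W (map_mat \<phi> (transpose_mat Y * Y))"

definition cross2 :: "real mat \<Rightarrow> nat \<Rightarrow> nat \<Rightarrow> real" where
  "cross2 Y i j = Y $$ (0,i) * Y $$ (1,j) - Y $$ (1,i) * Y $$ (0,j)"

definition torque :: "(real \<Rightarrow> real) \<Rightarrow> real mat \<Rightarrow> real mat \<Rightarrow> nat \<Rightarrow> real" where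
  "torque \<phi>' W Y i = (\<Sum>j<dim_col Y. W $$ (i,j) * \<phi>' (col Y i \<bullet> col Y j) * cross2 Y i j)"

lemma col_inner_2:
  assumes "Y \<in> carrier_mat 2 k" and "i < k" and "j < k"
  shows "col Y i \<bullet> col Y j = Y $$ (0,i) * Y $$ (0,j) + Y $$ (1,i) * Y $$ (1,j)"
  using assms
  by (simp add: scalar_prod_def numeral_2_eq_2 lessThan_atLeast0[symmetric] lessThan_Suc add.commute)

lemma circles_carrier: "Y \<in> circles k \<Longrightarrow> Y \<in> carrier_mat 2 k"
  by (simp add: circles_def)

lemma circles_unit:
  assumes "Y \<in> circles k" and "j < k"
  shows "(Y $$ (0,j))\<^sup>2 + (Y $$ (1,j))\<^sup>2 = 1"
  using assms col_inner_2[OF circles_carrier[OF assms(1)] assms(2) assms(2)]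
  by (simp add: circles_def power2_eq_square)

lemma circlesI:
  assumes "Y \<in> carrier_mat 2 k" and "\<And>j. j < k \<Longrightarrow> (Y $$ (0,j))\<^sup>2 + (Y $$ (1,j))\<^sup>2 = 1"
  shows "Y \<in> circles k"
  using assms col_inner_2[OF assms(1)] by (simp add: circles_def power2_eq_square)

lemma inner_unit_vectors_bound:
  fixes x0 x1 y0 y1 :: real
  assumes "x0\<^sup>2 + x1\<^sup>2 = 1" and "y0\<^sup>2 + y1\<^sup>2 = 1"
  shows "x0 * y0 + x1 * y1 \<in> {-1..1}"
proof -
  have "(x0 * y0 + x1 * y1)\<^sup>2 + (x0 * y1 - x1 * y0)\<^sup>2 = (x0\<^sup>2 + x1\<^sup>2) * (y0\<^sup>2 + y1\<^sup>2)"
    by (simp add: power2_eq_square algebra_simps)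
  with assms have "(x0 * y0 + x1 * y1)\<^sup>2 \<le> 1"
    by (metis le_add_same_cancel1 mult_1 zero_le_power2)
  then show ?thesis
    by (simp add: abs_square_le_1 abs_le_iff)
qed

lemma frob_map_gram:
  assumes W: "W \<in> carrier_mat k k" and Y: "Y \<in> carrier_mat 2 k"
  shows "frob W (map_mat \<phi> (transpose_mat Y * Y)) = (\<Sum>i<k. \<Sum>j<k. W $$ (i,j) * \<phi> (col Y i \<bullet> col Y j))"
proof -
  have "(transpose_mat W * map_mat \<phi> (transpose_mat Y * Y)) $$ (j,j)
      = (\<Sum>i<k. W $$ (i,j) * \<phi> (col Y i \<bullet> col Y j))" if "j < k" for j
  proof -
    have "(transpose_mat W * map_mat \<phi> (transpose_mat Y * Y)) $$ (j,j)
        = (\<Sum>i<k. transpose_mat W $$ (j,i) * map_mat \<phi> (transpose_mat Y * Y) $$ (i,j))"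
      using W Y that by (intro index_mult_mat_sum) auto
    then show ?thesis
      using W Y that by (simp add: row_transpose)
  qed
  then have "frob W (map_mat \<phi> (transpose_mat Y * Y)) = (\<Sum>j<k. \<Sum>i<k. W $$ (i,j) * \<phi> (col Y i \<bullet> col Y j))"
    using W by (simp add: frob_def tr_def)
  also have "\<dots> = (\<Sum>i<k. \<Sum>j<k. W $$ (i,j) * \<phi> (col Y i \<bullet> col Y j))"
    by (rule sum.swap)
  finally show ?thesis .
qed

lemma unit_curve_tangent:
  fixes x0 x1 :: "real \<Rightarrow> real"
  assumes "\<And>t. (x0 t)\<^sup>2 + (x1 t)\<^sup>2 = 1"
    and "(x0 has_real_derivative v0) (at 0)" and "(x1 has_real_derivative v1) (at 0)"
  shows "x0 0 * v0 + x1 0 * v1 = 0"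
proof -
  have "((\<lambda>t. (x0 t)\<^sup>2 + (x1 t)\<^sup>2) has_real_derivative 2 * (x0 0 * v0 + x1 0 * v1)) (at 0)"
    using assms(2,3) by (auto intro!: derivative_eq_intros simp: algebra_simps)
  moreover have "((\<lambda>t. (x0 t)\<^sup>2 + (x1 t)\<^sup>2) has_real_derivative 0) (at 0)"
    unfolding assms(1) by (rule DERIV_const)
  ultimately show ?thesis
    using DERIV_unique by fastforce
qed

lemma tangent_eq_rotation:
  fixes x0 x1 v0 v1 :: real
  assumes unit: "x0\<^sup>2 + x1\<^sup>2 = 1" and orth: "x0 * v0 + x1 * v1 = 0"
  shows "v0 = - (x0 * v1 - x1 * v0) * x1" and "v1 = (x0 * v1 - x1 * v0) * x0"
proof -
  have "- (x0 * v1 - x1 * v0) * x1 = v0 * (x0\<^sup>2 + x1\<^sup>2) - x0 * (x0 * v0 + x1 * v1)"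
    and "(x0 * v1 - x1 * v0) * x0 = v1 * (x0\<^sup>2 + x1\<^sup>2) - x1 * (x0 * v0 + x1 * v1)"
    by (simp_all add: power2_eq_square algebra_simps)
  then show "v0 = - (x0 * v1 - x1 * v0) * x1" and "v1 = (x0 * v1 - x1 * v0) * x0"
    by (simp_all add: unit orth)
qed

lemma sum_sum_symmetrize:
  fixes F a :: "nat \<Rightarrow> nat \<Rightarrow> 'a::comm_semiring_1"
  assumes "\<And>i j. i < k \<Longrightarrow> j < k \<Longrightarrow> F i j = F j i"
  shows "(\<Sum>i<k. \<Sum>j<k. F i j * (a i j + a j i)) = 2 * (\<Sum>i<k. \<Sum>j<k. F i j * a i j)"
proof -
  have "(\<Sum>i<k. \<Sum>j<k. F i j * a j i) = (\<Sum>j<k. \<Sum>i<k. F i j * a j i)"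
    by (rule sum.swap)
  also have "\<dots> = (\<Sum>j<k. \<Sum>i<k. F j i * a j i)"
    using assms by (intro sum.cong refl) simp
  finally show ?thesis
    by (simp add: distrib_left sum.distrib mult_2)
qed

lemma has_real_derivative_gram_entry:
  fixes \<gamma> :: "real \<Rightarrow> real mat"
  assumes \<gamma>: "\<And>t. \<gamma> t \<in> circles k"
    and D: "\<And>a b. a < 2 \<Longrightarrow> b < k \<Longrightarrow> ((\<lambda>t. \<gamma> t $$ (a,b)) has_real_derivative D a b) (at 0)"
    and i: "i < k" and j: "j < k"
  defines "\<omega> \<equiv> \<lambda>l. \<gamma> 0 $$ (0,l) * D 1 l - \<gamma> 0 $$ (1,l) * D 0 l"
  shows "((\<lambda>t. col (\<gamma> t) i \<bullet> col (\<gamma> t) j) has_real_derivative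
           \<omega> i * cross2 (\<gamma> 0) i j + \<omega> j * cross2 (\<gamma> 0) j i) (at 0)"
proof -
  have rot: "D 0 l = - \<omega> l * \<gamma> 0 $$ (1,l)" "D 1 l = \<omega> l * \<gamma> 0 $$ (0,l)" if "l < k" for l
  proof -
    have "\<gamma> 0 $$ (0,l) * D 0 l + \<gamma> 0 $$ (1,l) * D 1 l = 0"
      using circles_unit[OF \<gamma> that] D[OF _ that] by (intro unit_curve_tangent) simp_all
    from tangent_eq_rotation[OF circles_unit[OF \<gamma> that] this]
    show "D 0 l = - \<omega> l * \<gamma> 0 $$ (1,l)" "D 1 l = \<omega> l * \<gamma> 0 $$ (0,l)"
      by (simp_all add: \<omega>_def)
  qed
  have "(\<lambda>t. col (\<gamma> t) i \<bullet> col (\<gamma> t) j)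
      = (\<lambda>t. \<gamma> t $$ (0,i) * \<gamma> t $$ (0,j) + \<gamma> t $$ (1,i) * \<gamma> t $$ (1,j))"
    using col_inner_2[OF circles_carrier[OF \<gamma>] i j] by simp
  moreover have "((\<lambda>t. \<gamma> t $$ (0,i) * \<gamma> t $$ (0,j) + \<gamma> t $$ (1,i) * \<gamma> t $$ (1,j)) has_real_derivative
      D 0 i * \<gamma> 0 $$ (0,j) + \<gamma> 0 $$ (0,i) * D 0 j
      + (D 1 i * \<gamma> 0 $$ (1,j) + \<gamma> 0 $$ (1,i) * D 1 j)) (at 0)"
    using i j by (auto intro!: derivative_eq_intros D)
  moreover have "D 0 i * \<gamma> 0 $$ (0,j) + \<gamma> 0 $$ (0,i) * D 0 j
      + (D 1 i * \<gamma> 0 $$ (1,j) + \<gamma> 0 $$ (1,i) * D 1 j)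
      = \<omega> i * cross2 (\<gamma> 0) i j + \<omega> j * cross2 (\<gamma> 0) j i"
    by (simp only: rot[OF i] rot[OF j]) (simp add: cross2_def algebra_simps)
  ultimately show ?thesis by simp
qed

lemma DERIV_chain_within_range:
  assumes "\<And>t. g t \<in> S" and "(f has_real_derivative f') (at (g x) within S)"
    and "(g has_real_derivative g') (at x)"
  shows "((\<lambda>t. f (g t)) has_real_derivative f' * g') (at x)"
  using DERIV_image_chain[OF DERIV_subset[OF assms(2)] assms(3)] assms(1) by (auto simp: o_def)

lemma has_real_derivative_pair_energy:
  fixes \<phi> \<phi>' :: "real \<Rightarrow> real" and \<gamma> :: "real \<Rightarrow> real mat"
  assumes d1: "\<And>t. t \<in> {-1..1} \<Longrightarrow> (\<phi> has_real_derivative \<phi>' t) (at t within {-1..1})"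
    and W: "W \<in> carrier_mat k k" and W_sym: "\<And>i j. i < k \<Longrightarrow> j < k \<Longrightarrow> W $$ (i,j) = W $$ (j,i)"
    and \<gamma>: "\<And>t. \<gamma> t \<in> circles k"
    and D: "\<And>a b. a < 2 \<Longrightarrow> b < k \<Longrightarrow> ((\<lambda>t. \<gamma> t $$ (a,b)) has_real_derivative D a b) (at 0)"
  shows "((\<lambda>t. pair_energy \<phi> W (\<gamma> t)) has_real_derivative
           (\<Sum>i<k. (\<gamma> 0 $$ (0,i) * D 1 i - \<gamma> 0 $$ (1,i) * D 0 i) * torque \<phi>' W (\<gamma> 0) i)) (at 0)"
proof -
  define Y where "Y = \<gamma> 0"
  define \<omega> where "\<omega> l = Y $$ (0,l) * D 1 l - Y $$ (1,l) * D 0 l" for l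
  define g where "g i j t = col (\<gamma> t) i \<bullet> col (\<gamma> t) j" for i j t
  define F where "F i j = W $$ (i,j) * \<phi>' (g i j 0)" for i j
  have Y: "Y \<in> carrier_mat 2 k" using \<gamma> by (simp add: Y_def circles_carrier)
  have energy: "pair_energy \<phi> W (\<gamma> t) = 1/2 * (\<Sum>i<k. \<Sum>j<k. W $$ (i,j) * \<phi> (g i j t))" for t
    using frob_map_gram[OF W circles_carrier[OF \<gamma>]] by (simp add: pair_energy_def g_def)
  have "((\<lambda>t. \<phi> (g i j t)) has_real_derivative
      \<phi>' (g i j 0) * (\<omega> i * cross2 Y i j + \<omega> j * cross2 Y j i)) (at 0)"
    if "i < k" "j < k" for i j
  proof (rule DERIV_chain_within_range[where g = "g i j" and S = "{-1..1}"])
    show "g i j t \<in> {-1..1}" for t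
      using col_inner_2[OF circles_carrier[OF \<gamma>] that]
        inner_unit_vectors_bound[OF circles_unit[OF \<gamma> that(1)] circles_unit[OF \<gamma> that(2)]]
      by (simp add: g_def)
    then show "(\<phi> has_real_derivative \<phi>' (g i j 0)) (at (g i j 0) within {-1..1})"
      by (intro d1)
    show "(g i j has_real_derivative \<omega> i * cross2 Y i j + \<omega> j * cross2 Y j i) (at 0)"
      unfolding g_def[abs_def] Y_def \<omega>_def using \<gamma> D that by (rule has_real_derivative_gram_entry)
  qed
  then have deriv: "((\<lambda>t. pair_energy \<phi> W (\<gamma> t)) has_real_derivative
      1/2 * (\<Sum>i<k. \<Sum>j<k. F i j * (\<omega> i * cross2 Y i j + \<omega> j * cross2 Y j i))) (at 0)"
    unfolding energy F_def by (auto intro!: derivative_eq_intros sum.cong simp: ac_simps)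
  have "F i j = F j i" if "i < k" "j < k" for i j
    using W_sym[OF that] Y that by (simp add: F_def g_def Y_def[symmetric] comm_scalar_prod[of _ 2])
  then have "1/2 * (\<Sum>i<k. \<Sum>j<k. F i j * (\<omega> i * cross2 Y i j + \<omega> j * cross2 Y j i))
      = (\<Sum>i<k. \<Sum>j<k. F i j * (\<omega> i * cross2 Y i j))"
    by (simp add: sum_sum_symmetrize)
  also have "\<dots> = (\<Sum>i<k. \<omega> i * torque \<phi>' W Y i)"
    using Y by (simp add: torque_def F_def g_def Y_def[symmetric] sum_distrib_left ac_simps)
  finally show ?thesis
    using deriv by (simp add: Y_def \<omega>_def)
qed

definition rotate_col :: "real mat \<Rightarrow> nat \<Rightarrow> real \<Rightarrow> real mat" where
  "rotate_col Y j t = mat 2 (dim_col Y) (\<lambda>(a,b).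
     if b \<noteq> j then Y $$ (a,b)
     else if a = 0 then cos t * Y $$ (0,j) - sin t * Y $$ (1,j)
     else sin t * Y $$ (0,j) + cos t * Y $$ (1,j))"

lemma rotate_col_circles:
  assumes Y: "Y \<in> circles k"
  shows "rotate_col Y j t \<in> circles k"
proof (rule circlesI)
  show "rotate_col Y j t \<in> carrier_mat 2 k"
    using circles_carrier[OF Y] by (simp add: rotate_col_def)
  fix b assume b: "b < k"
  have "(c * x0 - s * x1)\<^sup>2 + (s * x0 + c * x1)\<^sup>2 = (s\<^sup>2 + c\<^sup>2) * (x0\<^sup>2 + x1\<^sup>2)"
    for c s x0 x1 :: real by (simp add: power2_eq_square algebra_simps)
  from this[where c = "cos t" and s = "sin t"]
  show "(rotate_col Y j t $$ (0,b))\<^sup>2 + (rotate_col Y j t $$ (1,b))\<^sup>2 = 1"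
    using circles_carrier[OF Y] circles_unit[OF Y b] b by (cases "b = j") (simp_all add: rotate_col_def)
qed

lemma rotate_col_0: "Y \<in> carrier_mat 2 k \<Longrightarrow> rotate_col Y j 0 = Y"
  by (rule eq_matI) (auto simp: rotate_col_def less_2_cases_iff)

lemma has_real_derivative_rotate_col:
  assumes "a < 2" and "b < dim_col Y"
  shows "((\<lambda>t. rotate_col Y j t $$ (a,b)) has_real_derivative
           (if b \<noteq> j then 0 else if a = 0 then - Y $$ (1,j) else Y $$ (0,j))) (at 0)"
  using assms by (auto simp: rotate_col_def intro!: derivative_eq_intros)

lemma torque_eq_0_if_critical:
  fixes \<phi> \<phi>' :: "real \<Rightarrow> real"
  assumes d1: "\<And>t. t \<in> {-1..1} \<Longrightarrow> (\<phi> has_real_derivative \<phi>' t) (at t within {-1..1})"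
    and W: "W \<in> carrier_mat k k" and W_sym: "\<And>i j. i < k \<Longrightarrow> j < k \<Longrightarrow> W $$ (i,j) = W $$ (j,i)"
    and crit: "critical k (pair_energy \<phi> W) Y" and i: "i < k"
  shows "torque \<phi>' W Y i = 0"
proof -
  have Y: "Y \<in> circles k" using crit by (simp add: critical_def)
  let ?D = "\<lambda>(a::nat) b. if b \<noteq> i then 0 else if a = 0 then - Y $$ (1,i) else Y $$ (0,i)"
  have D: "((\<lambda>t. rotate_col Y i t $$ (a,b)) has_real_derivative ?D a b) (at 0)"
    if "a < 2" "b < k" for a b
    using that circles_carrier[OF Y] by (intro has_real_derivative_rotate_col) simp_all
  note rot = rotate_col_circles[OF Y] rotate_col_0[OF circles_carrier[OF Y]]
  have \<omega>: "Y $$ (0,l) * ?D 1 l - Y $$ (1,l) * ?D 0 l = (if l = i then 1 else 0)" for l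
    using circles_unit[OF Y i] by (simp add: power2_eq_square)
  have "((\<lambda>t. pair_energy \<phi> W (rotate_col Y i t)) has_real_derivative
      (\<Sum>l<k. (Y $$ (0,l) * ?D 1 l - Y $$ (1,l) * ?D 0 l) * torque \<phi>' W Y l)) (at 0)"
    using has_real_derivative_pair_energy[OF d1 W W_sym rot(1) D] by (simp only: rot(2))
  then have "((\<lambda>t. pair_energy \<phi> W (rotate_col Y i t)) has_real_derivative torque \<phi>' W Y i) (at 0)"
    using i by (simp only: \<omega>) (simp add: if_distrib[of "\<lambda>x. x * _"] cong: if_cong)
  moreover have "((\<lambda>t. pair_energy \<phi> W (rotate_col Y i t)) has_real_derivative 0) (at 0)"
    using crit rot D unfolding critical_def real_differentiable_def by blast
  ultimately show ?thesis
    by (rule DERIV_unique)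
qed

lemma critical_if_torque_eq_0:
  fixes \<phi> \<phi>' :: "real \<Rightarrow> real"
  assumes d1: "\<And>t. t \<in> {-1..1} \<Longrightarrow> (\<phi> has_real_derivative \<phi>' t) (at t within {-1..1})"
    and W: "W \<in> carrier_mat k k" and W_sym: "\<And>i j. i < k \<Longrightarrow> j < k \<Longrightarrow> W $$ (i,j) = W $$ (j,i)"
    and Y: "Y \<in> circles k" and torque: "\<And>i. i < k \<Longrightarrow> torque \<phi>' W Y i = 0"
  shows "critical k (pair_energy \<phi> W) Y"
  unfolding critical_def
proof (intro conjI allI impI)
  fix \<gamma> :: "real \<Rightarrow> real mat"
  assume \<gamma>: "(\<forall>t. \<gamma> t \<in> circles k) \<and> \<gamma> 0 = Y \<and>
    (\<forall>a<2. \<forall>b<k. (\<lambda>t. \<gamma> t $$ (a,b)) differentiable (at 0))"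
  then obtain D where "((\<lambda>t. \<gamma> t $$ (a,b)) has_real_derivative D a b) (at 0)" if "a < 2" "b < k" for a b
    unfolding real_differentiable_def by metis
  from has_real_derivative_pair_energy[OF d1 W W_sym _ this] \<gamma> torque
  show "((\<lambda>t. pair_energy \<phi> W (\<gamma> t)) has_real_derivative 0) (at 0)"
    by simp
qed (fact Y)

lemma rep_cols_carrier: "rep_cols q m X \<in> carrier_mat 2 (block_start q m)"
  by (simp add: rep_cols_def block_start_def)

lemma index_rep_cols: "a < 2 \<Longrightarrow> b < block_start q m \<Longrightarrow> rep_cols q m X $$ (a,b) = X $$ (a, blk q b)"
  by (simp add: rep_cols_def block_start_def)

lemma col_rep_cols:
  assumes "X \<in> carrier_mat 2 m" and "b < block_start q m"
  shows "col (rep_cols q m X) b = col X (blk q b)"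
  using assms blk_bounds(1)[OF assms(2)] by (intro eq_vecI) (simp_all add: rep_cols_def block_start_def)

lemma rep_cols_circles:
  assumes X: "X \<in> circles m"
  shows "rep_cols q m X \<in> circles (block_start q m)"
  using circles_unit[OF X blk_bounds(1)] by (intro circlesI rep_cols_carrier) (simp add: index_rep_cols)

lemma torque_rep_cols:
  fixes \<phi>' :: "real \<Rightarrow> real" and q :: "nat \<Rightarrow> nat" and m :: nat
  defines "n \<equiv> block_start q m"
  assumes X: "X \<in> carrier_mat 2 m" and a: "a < n"
  shows "real (q (blk q a)) * torque \<phi>' (mat n n (\<lambda>_. 1)) (rep_cols q m X) a
    = torque \<phi>' (mat m m (\<lambda>(i,j). real (q i) * real (q j))) X (blk q a)"
proof -
  define G where "G j = \<phi>' (col X (blk q a) \<bullet> col X j) * cross2 X (blk q a) j" for j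
  have "torque \<phi>' (mat n n (\<lambda>_. 1)) (rep_cols q m X) a = (\<Sum>b<n. G (blk q b))"
    using a X rep_cols_carrier[of q m X]
    by (simp add: torque_def G_def n_def col_rep_cols cross2_def index_rep_cols)
  also have "\<dots> = (\<Sum>j<m. real (q j) * G j)"
    unfolding n_def by (rule sum_real_comp_blk)
  finally show ?thesis
    using X blk_bounds(1)[of a q m] a
    by (simp add: torque_def G_def n_def sum_distrib_left ac_simps)
qed

lemma critical_rep_cols:
  fixes \<phi> \<phi>' :: "real \<Rightarrow> real" and q :: "nat \<Rightarrow> nat" and m :: nat
  defines "n \<equiv> block_start q m"
  assumes d1: "\<And>t. t \<in> {-1..1} \<Longrightarrow> (\<phi> has_real_derivative \<phi>' t) (at t within {-1..1})"
    and q: "\<And>i. i < m \<Longrightarrow> 0 < q i"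
    and crit: "critical m (pair_energy \<phi> (mat m m (\<lambda>(i,j). real (q i) * real (q j)))) X"
  shows "critical n (pair_energy \<phi> (mat n n (\<lambda>_. 1))) (rep_cols q m X)"
proof (rule critical_if_torque_eq_0[OF d1])
  have X: "X \<in> circles m" using crit by (simp add: critical_def)
  then show "rep_cols q m X \<in> circles n" unfolding n_def by (rule rep_cols_circles)
  show "torque \<phi>' (mat n n (\<lambda>_. 1)) (rep_cols q m X) a = 0" if a: "a < n" for a
  proof -
    have "blk q a < m" using a blk_bounds(1) by (simp add: n_def)
    with q[of "blk q a"] torque_eq_0_if_critical[OF d1 _ _ crit]
      torque_rep_cols[where \<phi>' = \<phi>' and q = q and m = m, folded n_def, OF circles_carrier[OF X] a]
    show ?thesis by simp
  qed
qed simp_all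

theorem mainTheorem13:
  fixes \<phi> \<phi>' \<phi>'' :: "real \<Rightarrow> real" and m :: nat and q :: "nat \<Rightarrow> nat" and X :: "real mat"
  assumes d1: "\<And>t. t \<in> {-1..1} \<Longrightarrow> (\<phi> has_real_derivative \<phi>' t) (at t within {-1..1})"
    and d2: "\<And>t. t \<in> {-1..1} \<Longrightarrow> (\<phi>' has_real_derivative \<phi>'' t) (at t within {-1..1})"
    and c2: "continuous_on {-1..1} \<phi>''"
    and m: "m \<ge> 1"
    and q: "\<And>i. i < m \<Longrightarrow> q i > 0"
    and X: "X \<in> circles m"
  shows "let n = (\<Sum>i<m. q i);
             fm = (\<lambda>Y. 1/2 * frob (mat m m (\<lambda>(i,j). real (q i) * real (q j)))
                                   (map_mat \<phi> (transpose_mat Y * Y)));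
             fn = (\<lambda>Y. 1/2 * frob (mat n n (\<lambda>_. 1)) (map_mat \<phi> (transpose_mat Y * Y)));
             Xt = rep_cols q m X;
             h = (\<lambda>t. t * \<phi>' t - (1 - t^2) * \<phi>'' t);
             M = mat m m (\<lambda>(i,j). real (q i) * real (q j) * h (col X i \<bullet> col X j));
             d = (\<lambda>i. \<Sum>j<m. M $$ (i,j));
             Mt = mat n n (\<lambda>(i,j). h (col Xt i \<bullet> col Xt j))
         in (critical m fm X \<longrightarrow> critical n fn Xt) \<and>
            eigenvalues (sqrtQ q m * lap Mt * sqrtQ q m)
              = eigenvalues (lap M) + (\<Sum>i<m. replicate_mset (q i - 1) (d i))"
proof -
  define h where "h t = t * \<phi>' t - (1 - t^2) * \<phi>'' t" for t
  define H where "H i j = h (col X i \<bullet> col X j)" for i j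
  have n: "(\<Sum>i<m. q i) = block_start q m"
    by (simp add: block_start_def)
  have energy: "(\<lambda>Y. 1/2 * frob W (map_mat \<phi> (transpose_mat Y * Y))) = pair_energy \<phi> W" for W
    by (simp add: pair_energy_def[abs_def])
  have Mt: "mat (block_start q m) (block_start q m)
      (\<lambda>(i,j). h (col (rep_cols q m X) i \<bullet> col (rep_cols q m X) j))
      = blow_up q m H"
    by (rule eq_matI) (simp_all add: blow_up_def H_def col_rep_cols circles_carrier[OF X])
  show ?thesis
    unfolding Let_def n energy h_def[symmetric] Mt
    using critical_rep_cols[OF d1 q] eigenvalues_sqrtQ_lap_blow_up[where H = H and q = q and m = m, OF q]
    by (simp add: H_def)
qed

end
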